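(* Let $\Gamma$ be a Taylor graph with vertex set $X$, let $x\in X$, and let $W$ be an irreducible $T(x)$-module. Then the endpoint of $W$ is either $0$ or $1$.
   Context: A Taylor graph is a distance-regular graph with intersection array $\{k,b,1;1,b,k\}$ where $b<k-1$; it has diameter $3$. Let $A$ be its adjacency matrix, $\partial$ its distance, $V=\mathbb{C}^X$, and for $0\le i\le 3$ let $E^*_i(x)$ be the diagonal matrix with $(E^*_i(x))_{yy}=1$ if $\partial(x,y)=i$ and $0$ otherwise. The Terwilliger algebra $T(x)$ is the subalgebra of $\mathrm{Mat}_X(\mathbb{C})$ generated by $A,E^*_0(x),\dots,E^*_3(x)$. A $T(x)$-module is a subspace $W\subseteq V$ with $BW\subseteq W$ for all $B\in T(x)$; it is irreducible if nonzero with no submodules other than $0,W$. The endpoint of an irreducible $T(x)$-module $W$ is $\min\{i: E^*_i(x)W\neq 0\}$. *)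

theory Defs
  imports Complex_Main
begin

definition simple_graph :: "('a \<Rightarrow> 'a \<Rightarrow> bool) \<Rightarrow> bool" where
  "simple_graph E \<longleftrightarrow> (\<forall>x y. E x y \<longrightarrow> E y x) \<and> (\<forall>x. \<not> E x x)"

definition connected_graph :: "('a \<Rightarrow> 'a \<Rightarrow> bool) \<Rightarrow> bool" where
  "connected_graph E \<longleftrightarrow> (\<forall>x y. \<exists>n. (E ^^ n) x y)"

definition gdist :: "('a \<Rightarrow> 'a \<Rightarrow> bool) \<Rightarrow> 'a \<Rightarrow> 'a \<Rightarrow> nat" where
  "gdist E x y = (LEAST n. (E ^^ n) x y)"

definition distance_regular ::
  "('a::finite \<Rightarrow> 'a \<Rightarrow> bool) \<Rightarrow> nat \<Rightarrow> (nat \<Rightarrow> nat) \<Rightarrow> (nat \<Rightarrow> nat) \<Rightarrow> bool" where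
  "distance_regular E d bs cs \<longleftrightarrow>
     simple_graph E \<and> connected_graph E \<and>
     (\<forall>x y. gdist E x y \<le> d) \<and> (\<exists>x y. gdist E x y = d) \<and>
     (\<forall>x y. \<forall>i. gdist E x y = i \<longrightarrow>
        card {z. E y z \<and> gdist E x z = i + 1} = (if i < d then bs i else 0) \<and>
        card {z. E y z \<and> gdist E x z + 1 = i} = (if 0 < i then cs i else 0))"

text \<open>Taylor graph: intersection array {k,b,1;1,b,k} with b < k - 1.\<close>
definition taylor_graph :: "('a::finite \<Rightarrow> 'a \<Rightarrow> bool) \<Rightarrow> nat \<Rightarrow> nat \<Rightarrow> bool" where
  "taylor_graph E k b \<longleftrightarrow> int b < int k - 1 \<and>
     distance_regular E 3 (\<lambda>i. if i = 0 then k else if i = 1 then b else 1)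
                          (\<lambda>i. if i = 1 then 1 else if i = 2 then b else k)"

type_synonym 'a cmat = "'a \<Rightarrow> 'a \<Rightarrow> complex"
type_synonym 'a cvec = "'a \<Rightarrow> complex"

definition mmult :: "'a::finite cmat \<Rightarrow> 'a cmat \<Rightarrow> 'a cmat" where
  "mmult M N = (\<lambda>i j. \<Sum>l\<in>UNIV. M i l * N l j)"

definition mvec :: "'a::finite cmat \<Rightarrow> 'a cvec \<Rightarrow> 'a cvec" where
  "mvec M v = (\<lambda>i. \<Sum>j\<in>UNIV. M i j * v j)"

definition adj_mat :: "('a \<Rightarrow> 'a \<Rightarrow> bool) \<Rightarrow> 'a cmat" where
  "adj_mat E = (\<lambda>y z. if E y z then 1 else 0)"

definition dual_idem :: "('a \<Rightarrow> 'a \<Rightarrow> bool) \<Rightarrow> 'a \<Rightarrow> nat \<Rightarrow> 'a cmat" where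
  "dual_idem E x i = (\<lambda>y z. if y = z \<and> gdist E x y = i then 1 else 0)"

inductive_set terwilliger :: "('a::finite \<Rightarrow> 'a \<Rightarrow> bool) \<Rightarrow> 'a \<Rightarrow> 'a cmat set"
  for E x where
  gen_A: "adj_mat E \<in> terwilliger E x"
| gen_E: "i \<le> 3 \<Longrightarrow> dual_idem E x i \<in> terwilliger E x"
| one: "(\<lambda>y z. if y = z then 1 else 0) \<in> terwilliger E x"
| add: "M \<in> terwilliger E x \<Longrightarrow> N \<in> terwilliger E x \<Longrightarrow> (\<lambda>i j. M i j + N i j) \<in> terwilliger E x"
| smult: "M \<in> terwilliger E x \<Longrightarrow> (\<lambda>i j. c * M i j) \<in> terwilliger E x"
| mult: "M \<in> terwilliger E x \<Longrightarrow> N \<in> terwilliger E x \<Longrightarrow> mmult M N \<in> terwilliger E x"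

definition csubspace_fun :: "'a cvec set \<Rightarrow> bool" where
  "csubspace_fun W \<longleftrightarrow> (\<lambda>_. 0) \<in> W \<and>
     (\<forall>u\<in>W. \<forall>v\<in>W. (\<lambda>i. u i + v i) \<in> W) \<and>
     (\<forall>c. \<forall>u\<in>W. (\<lambda>i. c * u i) \<in> W)"

definition T_module :: "('a::finite \<Rightarrow> 'a \<Rightarrow> bool) \<Rightarrow> 'a \<Rightarrow> 'a cvec set \<Rightarrow> bool" where
  "T_module E x W \<longleftrightarrow> csubspace_fun W \<and>
     (\<forall>B\<in>terwilliger E x. \<forall>v\<in>W. mvec B v \<in> W)"

definition irreducible_T_module :: "('a::finite \<Rightarrow> 'a \<Rightarrow> bool) \<Rightarrow> 'a \<Rightarrow> 'a cvec set \<Rightarrow> bool" where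
  "irreducible_T_module E x W \<longleftrightarrow> T_module E x W \<and> W \<noteq> {\<lambda>_. 0} \<and>
     (\<forall>U. T_module E x U \<and> U \<subseteq> W \<longrightarrow> U = {\<lambda>_. 0} \<or> U = W)"

definition endpoint :: "('a::finite \<Rightarrow> 'a \<Rightarrow> bool) \<Rightarrow> 'a \<Rightarrow> 'a cvec set \<Rightarrow> nat" where
  "endpoint E x W = (LEAST i. \<exists>v\<in>W. mvec (dual_idem E x i) v \<noteq> (\<lambda>_. 0))"

end

theory Submission
  imports Defs
begin

(* If an irreducible T(x)-module W had endpoint at least 2, every vector of W would vanish on
   the vertices at distance at most 1 from x; we show that such a T(x)-module is zero.
   In a Taylor graph every vertex u has a unique antipode u' (the only vertex at distance 3),
   and the neighbours of x' are exactly the vertices at distance 2 from x.  For v in W and a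
   neighbour y of x, (A^2 E*_3 v)(y) = b v(x'), so v also vanishes at x'.  Hence v lives on the
   vertices at distance 2 from x, and (A v)(x') is the total sum of v.  For such a vertex z,
   its antipode y is a neighbour of x; writing S_j for the sum of v over the vertices at
   distance j from y, the vanishing of (A v)(y) = S_1 and (A^2 v)(y) = (k - b - 1) S_1 + b S_2
   gives S_1 = S_2 = 0, and the total sum S_1 + S_2 + S_3 = S_3 = v z is zero as well. *)

lemma mvec_adj_mat: "mvec (adj_mat E) v y = (\<Sum>z\<in>{z. E y z}. v z)"
  unfolding mvec_def adj_mat_def of_bool_def[symmetric] by simp

lemma mvec_dual_idem: "mvec (dual_idem E x i) v y = (if gdist E x y = i then v y else 0)"
  unfolding mvec_def dual_idem_def of_bool_def[symmetric] by (simp add: Int_def)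

lemma mvec_mvec: "mvec M (mvec N v) = mvec (mmult M N) v"
proof
  fix i
  have "mvec M (mvec N v) i = (\<Sum>l\<in>UNIV. \<Sum>j\<in>UNIV. M i l * N l j * v j)"
    by (simp add: mvec_def sum_distrib_left mult.assoc)
  also have "\<dots> = (\<Sum>j\<in>UNIV. \<Sum>l\<in>UNIV. M i l * N l j * v j)"
    by (rule sum.swap)
  also have "\<dots> = mvec (mmult M N) v i"
    by (simp add: mvec_def mmult_def sum_distrib_right)
  finally show "mvec M (mvec N v) i = mvec (mmult M N) v i" .
qed

lemma mmult_adj_mat: "mmult (adj_mat E) (adj_mat E) y z = of_nat (card {s. E y s \<and> E s z})"
  unfolding mmult_def adj_mat_def of_bool_def[symmetric]
  by (simp add: of_bool_conj[symmetric] Int_def)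

lemma mvec_adj_mat_square:
  "mvec (adj_mat E) (mvec (adj_mat E) v) y =
     (\<Sum>z\<in>UNIV. of_nat (card {s. E y s \<and> E s z}) * v z)"
  unfolding mvec_mvec by (simp add: mvec_def mmult_adj_mat)

lemma T_module_zero: "T_module E x W \<Longrightarrow> (\<lambda>_. 0) \<in> W"
  unfolding T_module_def csubspace_fun_def by blast

lemma T_module_adj_mat: "T_module E x W \<Longrightarrow> v \<in> W \<Longrightarrow> mvec (adj_mat E) v \<in> W"
  unfolding T_module_def using terwilliger.gen_A by blast

lemma T_module_dual_idem:
  "T_module E x W \<Longrightarrow> i \<le> 3 \<Longrightarrow> v \<in> W \<Longrightarrow> mvec (dual_idem E x i) v \<in> W"
  unfolding T_module_def using terwilliger.gen_E by blast

lemma vanishes_below_endpoint: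
  assumes "i < endpoint E x W" and "v \<in> W" and "gdist E x y = i"
  shows "v y = 0"
proof -
  have "mvec (dual_idem E x i) v = (\<lambda>_. 0)"
    using not_less_Least[OF assms(1)[unfolded endpoint_def]] assms(2) by blast
  then show ?thesis
    using mvec_dual_idem[of E x i v y] assms(3) by metis
qed

lemma gdist_le_relpowp: "(E ^^ n) u v \<Longrightarrow> gdist E u v \<le> n"
  unfolding gdist_def by (rule Least_le)

locale connected_simple_graph =
  fixes E :: "'a \<Rightarrow> 'a \<Rightarrow> bool"
  assumes simple: "simple_graph E" and connected: "connected_graph E"
begin

lemma adj_sym: "E u v \<Longrightarrow> E v u"
  using simple unfolding simple_graph_def by blast

lemma adj_irrefl: "\<not> E u u"
  using simple unfolding simple_graph_def by blast

lemma relpowp_gdist: "(E ^^ gdist E u v) u v"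
  using connected unfolding gdist_def connected_graph_def by (metis LeastI_ex)

lemma relpowp_sym: "(E ^^ n) u v \<Longrightarrow> (E ^^ n) v u"
proof (induction n arbitrary: v)
  case 0
  then show ?case by simp
next
  case (Suc n)
  from Suc.prems obtain w where "(E ^^ n) u w" and "E w v"
    by (rule relpowp_Suc_E)
  then show ?case
    using Suc.IH relpowp_Suc_I2 adj_sym by metis
qed

lemma gdist_sym: "gdist E u v = gdist E v u"
  using gdist_le_relpowp[OF relpowp_sym[OF relpowp_gdist]] le_antisym by metis

lemma gdist_eq_0_iff: "gdist E u v = 0 \<longleftrightarrow> u = v"
  using relpowp_gdist[of u v] gdist_le_relpowp[of 0 E v v] by auto

lemma gdist_eq_1_iff: "gdist E u v = 1 \<longleftrightarrow> E u v"
proof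
  assume "gdist E u v = 1"
  then show "E u v" using relpowp_gdist[of u v] by auto
next
  assume "E u v"
  then have "gdist E u v \<le> 1" and "u \<noteq> v"
    using gdist_le_relpowp[of 1 E u v] adj_irrefl by auto
  then show "gdist E u v = 1"
    using gdist_eq_0_iff by (metis le_neq_implies_less less_one)
qed

lemma gdist_adj_le: "E v w \<Longrightarrow> gdist E u w \<le> gdist E u v + 1"
  using gdist_le_relpowp[OF relpowp_Suc_I[OF relpowp_gdist]] by simp

lemma gdist_SucE:
  assumes "gdist E u v = Suc n"
  obtains w where "gdist E u w = n" and "E w v"
proof -
  obtain w where w: "(E ^^ n) u w" "E w v"
    using relpowp_gdist[of u v] assms by (metis relpowp_Suc_E)
  then have "gdist E u w = n"
    using gdist_le_relpowp[OF w(1)] gdist_adj_le[OF w(2), of u] assms by linarith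
  then show thesis using that w(2) by blast
qed

lemma ex_gdist_eq: "i \<le> gdist E u v \<Longrightarrow> \<exists>w. gdist E u w = i"
proof (induction "gdist E u v" arbitrary: v)
  case 0
  then show ?case by auto
next
  case (Suc n)
  then show ?case
    by (metis gdist_SucE le_Suc_eq)
qed

lemma no_common_neighbours_if_far:
  assumes "2 < gdist E y z"
  shows "{s. E y s \<and> E s z} = {}"
proof -
  have "gdist E y z \<le> 2" if "E y s" and "E s z" for s
    using gdist_adj_le[OF that(2), of y] that(1) gdist_eq_1_iff[of y s] by simp
  with assms show ?thesis by fastforce
qed

end

locale distance_regular_graph =
  fixes E :: "'a::finite \<Rightarrow> 'a \<Rightarrow> bool" and d :: nat and bs cs :: "nat \<Rightarrow> nat"
  assumes distance_regular: "distance_regular E d bs cs"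
begin

sublocale connected_simple_graph E
  using distance_regular unfolding distance_regular_def by unfold_locales blast+

lemma gdist_le_diameter: "gdist E u v \<le> d"
  using distance_regular unfolding distance_regular_def by blast

lemma diameter_attained: "\<exists>u v. gdist E u v = d"
  using distance_regular unfolding distance_regular_def by blast

lemma intersection_numbers:
  "gdist E u v = i \<Longrightarrow>
     card {z. E v z \<and> gdist E u z = i + 1} = (if i < d then bs i else 0) \<and>
     card {z. E v z \<and> gdist E u z + 1 = i} = (if 0 < i then cs i else 0)"
  using distance_regular unfolding distance_regular_def by blast

lemma card_adj_farther:
  "gdist E u v = i \<Longrightarrow> i < d \<Longrightarrow> card {z. E v z \<and> gdist E u z = i + 1} = bs i"
  using intersection_numbers[of u v i] by simp

lemma card_adj_closer:
  "gdist E u v = i \<Longrightarrow> 0 < i \<Longrightarrow> card {z. E v z \<and> gdist E u z + 1 = i} = cs i"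
  using intersection_numbers[of u v i] by simp

lemma card_neighbours: "0 < d \<Longrightarrow> card {z. E v z} = bs 0"
  using card_adj_farther[of v v 0] gdist_eq_0_iff gdist_eq_1_iff by simp

lemma intersection_number_c_pos:
  assumes "0 < i" and "i \<le> d"
  shows "0 < cs i"
proof -
  obtain u v where "gdist E u v = d"
    using diameter_attained by blast
  then obtain w where w: "gdist E u w = i"
    using ex_gdist_eq assms(2) by metis
  with assms(1) obtain w' where "gdist E u w' + 1 = i" and "E w' w"
    by (metis Suc_eq_plus1 gdist_SucE gr0_conv_Suc)
  then have "w' \<in> {z. E w z \<and> gdist E u z + 1 = i}"
    using adj_sym by blast
  then show ?thesis
    using card_adj_closer[OF w assms(1)] card_gt_0_iff by fastforce
qed

lemma card_common_neighbours_adj: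
  assumes "1 < d" and "E y z"
  shows "card {s. E y s \<and> E s z} = bs 0 - cs 1 - bs 1"
proof -
  define X where "X j = {s. E z s \<and> gdist E y s = j}" for j
  have yz: "gdist E y z = 1"
    using assms(2) gdist_eq_1_iff by blast
  have "bs 0 = card {s. E z s}"
    using card_neighbours assms(1) by simp
  also have "{s. E z s} = X 0 \<union> X 1 \<union> X 2"
    using gdist_adj_le[of z _ y] yz by (fastforce simp: X_def)
  also have "card (X 0 \<union> X 1 \<union> X 2) = card (X 0) + card (X 1) + card (X 2)"
  proof -
    have "X i \<inter> X j = {}" if "i \<noteq> j" for i j
      using that by (auto simp: X_def)
    then show ?thesis by (simp add: card_Un_disjoint Int_Un_distrib2)
  qed
  finally have "bs 0 = card (X 0) + card (X 1) + card (X 2)" .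
  moreover have "card (X 0) = cs 1"
    using card_adj_closer[OF yz] by (simp add: X_def)
  moreover have "card (X 2) = bs 1"
    using card_adj_farther[OF yz] assms(1) by (simp add: X_def numeral_2_eq_2)
  moreover have "{s. E y s \<and> E s z} = X 1"
    using gdist_eq_1_iff adj_sym by (auto simp: X_def)
  ultimately show ?thesis by simp
qed

lemma card_common_neighbours_dist_2:
  assumes "gdist E y z = 2"
  shows "card {s. E y s \<and> E s z} = cs 2"
proof -
  have "{s. E y s \<and> E s z} = {s. E z s \<and> gdist E y s + 1 = 2}"
    using gdist_eq_1_iff adj_sym by auto
  then show ?thesis
    using card_adj_closer[OF assms] by simp
qed

lemma sum_UNIV_by_distance: "(\<Sum>z\<in>UNIV. f z) = (\<Sum>j\<le>d. \<Sum>z\<in>{z. gdist E y z = j}. f z)"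
  using sum.group[of UNIV "{..d}" "gdist E y" f] gdist_le_diameter by (simp add: image_subset_iff)

end

locale taylor =
  fixes E :: "'a::finite \<Rightarrow> 'a \<Rightarrow> bool" and k b :: nat
  assumes taylor: "taylor_graph E k b"
begin

sublocale distance_regular_graph E 3 "\<lambda>i. if i = 0 then k else if i = 1 then b else 1"
    "\<lambda>i. if i = 1 then 1 else if i = 2 then b else k"
  using taylor unfolding taylor_graph_def by unfold_locales blast

lemma b_less: "b + 1 < k"
  using taylor unfolding taylor_graph_def by linarith

lemma b_pos: "0 < b"
  using intersection_number_c_pos[of 2] by simp

lemma ex_neighbour: "\<exists>y. E x y"
proof -
  have "card {y. E x y} \<noteq> 0"
    using card_neighbours[of x] b_less by simp
  then show ?thesis
    by (metis Collect_empty_eq card.empty)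
qed

lemma neighbour_of_antipode:
  assumes q: "gdist E x q = 3" and "E q z"
  shows "gdist E x z = 2"
proof -
  have "card {z. E q z \<and> gdist E x z + 1 = 3} = card {z. E q z}"
    using card_adj_closer[OF q] card_neighbours by simp
  then have "{z. E q z \<and> gdist E x z + 1 = 3} = {z. E q z}"
    by (intro card_subset_eq) auto
  with \<open>E q z\<close> show ?thesis by auto
qed

lemma neighbours_of_antipode:
  assumes q: "gdist E x q = 3"
  shows "{z. E q z} = {z. gdist E x z = 2}"
proof (intro equalityI subsetI)
  fix t
  assume "t \<in> {z. gdist E x z = 2}"
  then have "gdist E x t = Suc 1" by simp
  then obtain y where xy: "gdist E x y = 1" and "E y t"
    by (rule gdist_SucE)
  have "gdist E q y = 2"
    using neighbour_of_antipode[of q x y] q xy gdist_sym gdist_eq_1_iff by metis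
  \<comment> \<open>both sets have b elements (c_2 = b_1 = b), and the first lies inside the second\<close>
  define A where "A = {z. E y z \<and> gdist E q z + 1 = 2}"
  define B where "B = {z. E y z \<and> gdist E x z = 1 + 1}"
  have "A \<subseteq> B"
    using neighbour_of_antipode[OF q] gdist_eq_1_iff by (auto simp: A_def B_def)
  moreover have "card A = card B"
    using card_adj_closer[OF \<open>gdist E q y = 2\<close>] card_adj_farther[OF xy]
    by (simp add: A_def B_def)
  ultimately have "A = B"
    by (intro card_subset_eq) auto
  moreover have "t \<in> B"
    using \<open>E y t\<close> \<open>gdist E x t = Suc 1\<close> by (simp add: B_def)
  ultimately have "t \<in> A" by simp
  then show "t \<in> {z. E q z}"
    using gdist_eq_1_iff by (simp add: A_def)
qed (use neighbour_of_antipode[OF q] in blast)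

lemma antipode_unique:
  assumes q: "gdist E x q = 3"
  shows "{z. gdist E x z = 3} = {q}"
proof -
  have "q' = q" if q': "gdist E x q' = 3" for q'
  proof -
    from q' have "gdist E x q' = Suc 2" by simp
    then obtain t where t: "gdist E x t = 2" and "E t q'"
      by (rule gdist_SucE)
    have "card {z. E t z \<and> gdist E x z = 3} = 1"
      using card_adj_farther[OF t] by simp
    then obtain r where r: "{z. E t z \<and> gdist E x z = 3} = {r}"
      by (rule card_1_singletonE)
    have "E t q"
      using neighbours_of_antipode[OF q] t adj_sym by blast
    then have "q \<in> {r}" and "q' \<in> {r}"
      unfolding r[symmetric] using \<open>E t q'\<close> q q' by auto
    then show ?thesis by simp
  qed
  with q show ?thesis by blast
qed

lemma antipode_exists:
  assumes "gdist E x z = 2"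
  obtains q where "E z q" and "gdist E x q = 3"
proof -
  have "card {q. E z q \<and> gdist E x q = 3} = 1"
    using card_adj_farther[OF assms] by simp
  then obtain q where "{q. E z q \<and> gdist E x q = 3} = {q}"
    by (rule card_1_singletonE)
  then show thesis
    using that by blast
qed

lemma card_common_neighbours:
  "card {s. E y s \<and> E s z} =
     (if gdist E y z = 0 then k else if gdist E y z = 1 then k - 1 - b
      else if gdist E y z = 2 then b else 0)"
proof -
  consider "gdist E y z = 0" | "gdist E y z = 1" | "gdist E y z = 2" | "2 < gdist E y z"
    by linarith
  then show ?thesis
  proof cases
    case 1
    then have "z = y"
      using gdist_eq_0_iff by simp
    then have "{s. E y s \<and> E s z} = {s. E y s}"
      using adj_sym by blast
    with 1 show ?thesis
      using card_neighbours[of y] by simp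
  next
    case 2
    then have "E y z"
      using gdist_eq_1_iff by simp
    with 2 show ?thesis
      using card_common_neighbours_adj[of y z] by simp
  next
    case 3
    then show ?thesis
      using card_common_neighbours_dist_2[OF 3] by simp
  next
    case 4
    then show ?thesis
      using no_common_neighbours_if_far[OF 4] by simp
  qed
qed

lemma mvec_adj_mat_square_apply:
  "mvec (adj_mat E) (mvec (adj_mat E) v) y =
     of_nat k * v y + of_nat (k - 1 - b) * (\<Sum>z\<in>{z. gdist E y z = 1}. v z)
     + of_nat b * (\<Sum>z\<in>{z. gdist E y z = 2}. v z)"
proof -
  define c where "c j = (if j = 0 then k else if j = 1 then k - 1 - b else if j = 2 then b else 0)"
    for j :: nat
  have "mvec (adj_mat E) (mvec (adj_mat E) v) y =
      (\<Sum>j\<le>3. \<Sum>z\<in>{z. gdist E y z = j}. of_nat (card {s. E y s \<and> E s z}) * v z)"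
    unfolding mvec_adj_mat_square by (rule sum_UNIV_by_distance)
  also have "\<dots> = (\<Sum>j\<le>3. of_nat (c j) * (\<Sum>z\<in>{z. gdist E y z = j}. v z))"
    unfolding sum_distrib_left
    by (intro sum.cong refl) (simp add: card_common_neighbours c_def)
  also have "\<dots> = of_nat k * v y + of_nat (k - 1 - b) * (\<Sum>z\<in>{z. gdist E y z = 1}. v z)
     + of_nat b * (\<Sum>z\<in>{z. gdist E y z = 2}. v z)"
    by (simp add: numeral_3_eq_3 numeral_2_eq_2 c_def gdist_eq_0_iff)
  finally show ?thesis .
qed

lemma T_module_vanishes_at_antipode:
  assumes W: "T_module E x W" and near: "\<forall>w\<in>W. \<forall>y. gdist E x y \<le> 1 \<longrightarrow> w y = 0"
    and v: "v \<in> W" and q: "gdist E x q = 3"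
  shows "v q = 0"
proof -
  obtain y where xy: "E x y"
    using ex_neighbour by blast
  then have xy1: "gdist E x y = 1"
    using gdist_eq_1_iff by blast
  have "gdist E q x = 3"
    using q gdist_sym by metis
  then have "gdist E q y = 2"
    using neighbours_of_antipode[of q x] xy by blast
  then have yq: "gdist E y q = 2"
    using gdist_sym by metis
  define w where "w = mvec (dual_idem E x 3) v"
  have "gdist E x z = 3 \<longleftrightarrow> z = q" for z
    using antipode_unique[OF q] by blast
  then have w: "w = (\<lambda>z. if z = q then v q else 0)"
    by (auto simp: w_def mvec_dual_idem)
  have "mvec (adj_mat E) (mvec (adj_mat E) w) \<in> W"
    unfolding w_def by (intro T_module_adj_mat[OF W] T_module_dual_idem[OF W] v) simp
  then have "mvec (adj_mat E) (mvec (adj_mat E) w) y = 0"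
    using near xy1 by (metis le_refl)
  moreover have "mvec (adj_mat E) (mvec (adj_mat E) w) y = of_nat b * v q"
    using card_common_neighbours_dist_2[OF yq]
    by (simp add: mvec_adj_mat_square w if_distrib[of "(*) _"] cong: if_cong)
  ultimately show ?thesis
    using b_pos by simp
qed

lemma T_module_vanishes_at_distance_2:
  assumes W: "T_module E x W" and supp: "\<forall>w\<in>W. \<forall>y. gdist E x y \<noteq> 2 \<longrightarrow> w y = 0"
    and v: "v \<in> W" and z: "gdist E x z = 2"
  shows "v z = 0"
proof -
  obtain q where q: "gdist E x q = 3"
    using antipode_exists[OF z] by blast
  have "gdist E z x = 2"
    using z gdist_sym by metis
  then obtain y where "E x y" and "gdist E z y = 3"
    by (rule antipode_exists)
  then have xy: "gdist E x y = 1" and yz: "gdist E y z = 3"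
    using gdist_eq_1_iff gdist_sym by metis+
  define S where "S j = (\<Sum>t\<in>{t. gdist E y t = j}. v t)" for j
  have Av: "mvec (adj_mat E) v \<in> W"
    using T_module_adj_mat[OF W v] .
  have AAv: "mvec (adj_mat E) (mvec (adj_mat E) v) \<in> W"
    using T_module_adj_mat[OF W Av] .
  have "(\<Sum>t\<in>UNIV. v t) = (\<Sum>t\<in>{t. gdist E x t = 2}. v t)"
    using supp v by (intro sum.mono_neutral_right) auto
  also have "\<dots> = mvec (adj_mat E) v q"
    using neighbours_of_antipode[OF q] by (simp add: mvec_adj_mat)
  also have "\<dots> = 0"
    using supp Av q by simp
  finally have total: "(\<Sum>t\<in>UNIV. v t) = 0" .
  have vy: "v y = 0"
    using supp v xy by simp
  have "{t. gdist E y t = 1} = {t. E y t}"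
    using gdist_eq_1_iff by blast
  then have "S 1 = mvec (adj_mat E) v y"
    by (simp add: S_def mvec_adj_mat)
  also have "\<dots> = 0"
    using supp Av xy by simp
  finally have S1: "S 1 = 0" .
  have "of_nat b * S 2 = mvec (adj_mat E) (mvec (adj_mat E) v) y"
    using mvec_adj_mat_square_apply[of v y] vy S1 by (simp add: S_def)
  also have "\<dots> = 0"
    using supp AAv xy by simp
  finally have S2: "S 2 = 0"
    using b_pos by simp
  have S3: "S 3 = v z"
    using antipode_unique[OF yz] by (simp add: S_def)
  have "(\<Sum>t\<in>UNIV. v t) = (\<Sum>j\<le>3. S j)"
    unfolding S_def by (rule sum_UNIV_by_distance)
  also have "\<dots> = v y + S 1 + S 2 + S 3"
    by (simp add: numeral_3_eq_3 numeral_2_eq_2 S_def gdist_eq_0_iff)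
  finally show ?thesis
    using total S1 S2 S3 vy by simp
qed

lemma T_module_eq_zero_if_vanishes_near_base:
  assumes W: "T_module E x W" and near: "\<forall>v\<in>W. \<forall>y. gdist E x y \<le> 1 \<longrightarrow> v y = 0"
  shows "W = {\<lambda>_. 0}"
proof -
  have supp: "\<forall>v\<in>W. \<forall>y. gdist E x y \<noteq> 2 \<longrightarrow> v y = 0"
  proof (intro ballI allI impI)
    fix v y
    assume v: "v \<in> W" and "gdist E x y \<noteq> 2"
    then consider "gdist E x y \<le> 1" | "gdist E x y = 3"
      using gdist_le_diameter[of x y] by linarith
    then show "v y = 0"
      using near v T_module_vanishes_at_antipode[OF W near v] by cases auto
  qed
  have "v = (\<lambda>_. 0)" if "v \<in> W" for v
  proof
    fix z
    show "v z = 0"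
      using supp that T_module_vanishes_at_distance_2[OF W supp that]
      by (cases "gdist E x z = 2") auto
  qed
  then show ?thesis
    using T_module_zero[OF W] by blast
qed

end

theorem lemma7p2:
  fixes E :: "'a::finite \<Rightarrow> 'a \<Rightarrow> bool" and k b :: nat and x :: 'a and W :: "'a cvec set"
  assumes "taylor_graph E k b"
    and "irreducible_T_module E x W"
  shows "endpoint E x W = 0 \<or> endpoint E x W = 1"
proof (rule ccontr)
  interpret taylor E k b
    using assms(1) by unfold_locales
  have W: "T_module E x W" and nonzero: "W \<noteq> {\<lambda>_. 0}"
    using assms(2) unfolding irreducible_T_module_def by blast+
  assume "\<not> ?thesis"
  then have "1 < endpoint E x W" by linarith
  then have "\<forall>v\<in>W. \<forall>y. gdist E x y \<le> 1 \<longrightarrow> v y = 0"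
    using vanishes_below_endpoint[of "gdist E x _" E x W] le_less_trans by blast
  then show False
    using T_module_eq_zero_if_vanishes_near_base[OF W] nonzero by blast
qed

end
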